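(* Let $a,b$ be Laurent polynomials with symmetry types $\mathrm{S}a(z)=\epsilon_az^{c_a}$ and $\mathrm{S}b(z)=\epsilon_bz^{c_b}$ ($\epsilon_a,\epsilon_b\in\{\pm1\}$, $c_a,c_b\in\mathbb Z$), with $b\neq0$. (i) If $\epsilon_a\epsilon_b=1$, or $c_a-c_b$ is odd (i.e. in each of the cases $\epsilon_a\epsilon_b=1$, $c_a-c_b$ odd; $\epsilon_a\epsilon_b=-1$, $c_a-c_b$ odd; $\epsilon_a\epsilon_b=1$, $c_a-c_b$ even), then one can construct a Laurent polynomial $q$ with symmetry such that $r(z):=a(z)-b(z)q(z)$ satisfies $\mathrm{len}(r)<\mathrm{len}(b)$ and $\mathrm{S}r(z)=\mathrm{S}a(z)=\mathrm{S}b(z)\,\mathrm{S}q(z)$. (ii) If $\epsilon_a\epsilon_b=-1$ and $c_a-c_b$ is even, then one can construct a Laurent polynomial $q$ with symmetry such that $r(z):=a(z)-b(z)q(z)$ satisfies $\mathrm{len}(r)\le\mathrm{len}(b)$ and $\mathrm{S}r(z)=\mathrm{S}a(z)=\mathrm{S}b(z)\,\mathrm{S}q(z)$.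
   Context: Laurent polynomial $u(z)=\sum_ku(k)z^k$ with finitely many nonzero complex coefficients. $u$ has symmetry of type $\epsilon z^c$ if $u(z)=\epsilon z^cu(z^{-1})$; for nonzero $u$, $\mathrm{S}u(z):=u(z)/u(z^{-1})$; the zero polynomial has symmetry of every type. For nonzero $u$, $\mathrm{len}(u):=\max\{k:u(k)\ne0\}-\min\{k:u(k)\neq0\}$, and $\mathrm{len}(0):=-\infty$. *)

theory Defs
  imports Complex_Main "HOL-Library.Extended_Real"
begin

text \<open>A Laurent polynomial u(z) = sum_k u(k) z^k is represented by its coefficient
  function u :: int => complex, required to have finite support.\<close>

definition laurent :: "(int \<Rightarrow> complex) \<Rightarrow> bool" where
  "laurent u \<longleftrightarrow> finite {k. u k \<noteq> 0}"

definition lmult :: "(int \<Rightarrow> complex) \<Rightarrow> (int \<Rightarrow> complex) \<Rightarrow> (int \<Rightarrow> complex)" where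
  "lmult u v = (\<lambda>k. \<Sum>j\<in>{j. u j \<noteq> 0}. u j * v (k - j))"

text \<open>u has symmetry of type eps z^c: u(z) = eps z^c u(z^{-1}), i.e. coefficientwise
  u(k) = eps u(c-k). The zero polynomial has symmetry of every type.\<close>

definition has_sym_type :: "(int \<Rightarrow> complex) \<Rightarrow> complex \<Rightarrow> int \<Rightarrow> bool" where
  "has_sym_type u eps c \<longleftrightarrow> (\<forall>k. u k = eps * u (c - k))"

definition len :: "(int \<Rightarrow> complex) \<Rightarrow> ereal" where
  "len u = (if u = (\<lambda>_. 0) then -\<infinity>
            else ereal (of_int (Max {k. u k \<noteq> 0} - Min {k. u k \<noteq> 0})))"

end

theory Submission
  imports Defs "HOL-Library.Function_Algebras"
begin

text \<open>Let \<open>L = len b\<close>; the support of \<open>b\<close> is an interval \<open>[mn, mx]\<close> of length \<open>L\<close>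
  centred at \<open>cb/2\<close>. Cancelling the top or the bottom coefficient of the remainder by a
  shifted copy of \<open>b\<close>, one at a time, pushes the remainder of \<open>a\<close> into any prescribed window
  of \<open>L\<close> consecutive exponents. If the window is also symmetric about \<open>ca/2\<close>, replacing
  \<open>q\<close> by the average of \<open>q\<close> and its reflection of type \<open>ea eb z^(ca - cb)\<close> averages the
  remainder with its reflection, so both become symmetric and the remainder stays in the window.
  Such a window of \<open>L\<close> exponents exists iff \<open>ca - cb\<close> is odd; otherwise take the symmetric
  window of \<open>L + 1\<close> exponents. In that case, if \<open>ea eb = 1\<close>, the central monomial
  \<open>z^((ca - cb)/2)\<close> has the required symmetry, so adding a multiple of it to \<open>q\<close> cancels the lowest
  coefficient of the remainder, and by symmetry the highest one too.\<close>

definition support :: "(int \<Rightarrow> complex) \<Rightarrow> int set" where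
  "support u = {k. u k \<noteq> 0}"

definition monomial :: "int \<Rightarrow> complex \<Rightarrow> int \<Rightarrow> complex" where
  "monomial m c = (\<lambda>k. if k = m then c else 0)"

text \<open>\<open>reflect e c u\<close> is \<open>e z^c u(z^-1)\<close>.\<close>

definition reflect :: "complex \<Rightarrow> int \<Rightarrow> (int \<Rightarrow> complex) \<Rightarrow> int \<Rightarrow> complex" where
  "reflect e c u = (\<lambda>k. e * u (c - k))"

definition symmetrize :: "complex \<Rightarrow> int \<Rightarrow> (int \<Rightarrow> complex) \<Rightarrow> int \<Rightarrow> complex" where
  "symmetrize e c u = (\<lambda>k. (u k + reflect e c u k) / 2)"

lemma laurent_iff_finite_support: "laurent u \<longleftrightarrow> finite (support u)"
  by (simp add: laurent_def support_def)

lemma support_add: "support (u + v) \<subseteq> support u \<union> support v"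
  by (auto simp: support_def)

lemma support_diff: "support (u - v) \<subseteq> support u \<union> support v"
  by (auto simp: support_def)

lemma laurent_zero: "laurent 0"
  by (simp add: laurent_def)

lemma laurent_add: "laurent u \<Longrightarrow> laurent v \<Longrightarrow> laurent (u + v)"
  using support_add by (metis finite_Un finite_subset laurent_iff_finite_support)

lemma laurent_diff: "laurent u \<Longrightarrow> laurent v \<Longrightarrow> laurent (u - v)"
  using support_diff by (metis finite_Un finite_subset laurent_iff_finite_support)

lemma laurent_monomial: "laurent (monomial m c)"
  unfolding laurent_iff_finite_support support_def monomial_def
  by (rule finite_subset[of _ "{m}"]) auto

lemma laurent_lmult:
  assumes "laurent u" and "laurent v"
  shows "laurent (lmult u v)"
proof -
  have "support (lmult u v) \<subseteq> (\<lambda>(i, j). i + j) ` (support u \<times> support v)"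
  proof
    fix k assume "k \<in> support (lmult u v)"
    then obtain j where "u j \<noteq> 0" and "v (k - j) \<noteq> 0"
      unfolding support_def lmult_def by (auto elim: sum.not_neutral_contains_not_neutral)
    then show "k \<in> (\<lambda>(i, j). i + j) ` (support u \<times> support v)"
      by (intro image_eqI[of _ _ "(j, k - j)"]) (auto simp: support_def)
  qed
  then show ?thesis
    using assms by (auto simp: laurent_iff_finite_support intro: finite_subset)
qed

lemma laurent_symmetrize:
  assumes "laurent u"
  shows "laurent (symmetrize e c u)"
proof -
  have "support (symmetrize e c u) \<subseteq> support u \<union> (\<lambda>k. c - k) ` support u"
    by (auto simp: support_def symmetrize_def reflect_def intro: image_eqI[of _ _ "c - k" for k])
  then show ?thesis
    using assms by (auto simp: laurent_iff_finite_support intro: finite_subset)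
qed

lemma lmult_zero_right: "lmult u 0 = 0"
  by (simp add: lmult_def fun_eq_iff)

lemma lmult_add_right: "lmult u (v + w) = lmult u v + lmult u w"
  by (simp add: lmult_def fun_eq_iff distrib_left sum.distrib)

lemma diff_lmult_add: "a - lmult b (q1 + q2) = a - lmult b q1 - lmult b q2"
  by (simp add: lmult_add_right)

lemma lmult_midpoint_right:
  "lmult u (\<lambda>k. (v k + w k) / 2) = (\<lambda>k. (lmult u v k + lmult u w k) / 2)"
  by (simp add: lmult_def fun_eq_iff distrib_left add_divide_distrib sum.distrib sum_divide_distrib)

lemma lmult_monomial_right:
  assumes "laurent u"
  shows "lmult u (monomial m c) = (\<lambda>k. c * u (k - m))"
proof
  fix k
  have "lmult u (monomial m c) k = (\<Sum>j\<in>support u. if j = k - m then u j * c else 0)"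
    unfolding lmult_def monomial_def support_def by (rule sum.cong) auto
  also have "\<dots> = c * u (k - m)"
    using assms by (simp add: laurent_iff_finite_support support_def)
  finally show "lmult u (monomial m c) k = c * u (k - m)" .
qed

lemma lmult_reflect:
  "lmult (reflect e1 c1 u) (reflect e2 c2 v) = reflect (e1 * e2) (c1 + c2) (lmult u v)"
proof (cases "e1 = 0")
  case True
  then show ?thesis by (simp add: lmult_def reflect_def fun_eq_iff)
next
  case False
  have "(\<Sum>j\<in>{j. e1 * u (c1 - j) \<noteq> 0}. e1 * u (c1 - j) * (e2 * v (c2 - (k - j))))
      = (\<Sum>i\<in>{i. u i \<noteq> 0}. e1 * e2 * (u i * v (c1 + c2 - k - i)))" for k
    by (rule sum.reindex_bij_witness[where i="\<lambda>i. c1 - i" and j="\<lambda>j. c1 - j"])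
      (auto simp: False algebra_simps)
  then show ?thesis by (simp add: lmult_def reflect_def fun_eq_iff sum_distrib_left)
qed

lemma has_sym_type_iff_reflect: "has_sym_type u e c \<longleftrightarrow> reflect e c u = u"
  unfolding has_sym_type_def reflect_def fun_eq_iff by (rule iff_allI) (rule eq_commute)

lemma has_sym_type_add:
  "has_sym_type u e c \<Longrightarrow> has_sym_type v e c \<Longrightarrow> has_sym_type (u + v) e c"
  unfolding has_sym_type_def by (metis distrib_left plus_fun_apply)

lemma has_sym_type_diff:
  "has_sym_type u e c \<Longrightarrow> has_sym_type v e c \<Longrightarrow> has_sym_type (u - v) e c"
  unfolding has_sym_type_def by (metis right_diff_distrib minus_apply)

lemma has_sym_type_monomial: "has_sym_type (monomial m c) 1 (2 * m)"
  by (auto simp: has_sym_type_def monomial_def)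

lemma has_sym_type_lmult:
  "has_sym_type u e1 c1 \<Longrightarrow> has_sym_type v e2 c2 \<Longrightarrow> has_sym_type (lmult u v) (e1 * e2) (c1 + c2)"
  by (metis has_sym_type_iff_reflect lmult_reflect)

lemma has_sym_type_symmetrize:
  assumes "e * e = 1"
  shows "has_sym_type (symmetrize e c u) e c"
proof -
  have "e * (e * x) = x" for x using assms by (simp add: mult.assoc[symmetric])
  then show ?thesis
    by (simp add: has_sym_type_def symmetrize_def reflect_def distrib_left add_divide_distrib)
qed

lemma has_sym_type_center:
  assumes "has_sym_type u e c" and "support u \<subseteq> {lo..hi}" and "u lo \<noteq> 0" and "u hi \<noteq> 0"
  shows "lo + hi = c"
proof -
  have "u (c - k) \<noteq> 0" if "u k \<noteq> 0" for k
    using assms(1) that unfolding has_sym_type_def by (metis mult_zero_right)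
  then have "c - lo \<in> support u" and "c - hi \<in> support u"
    using assms(3,4) by (simp_all add: support_def)
  then have "c - lo \<le> hi" and "lo \<le> c - hi"
    using assms(2) by auto
  then show ?thesis by linarith
qed

lemma has_sym_type_support_trim:
  assumes "has_sym_type u e c" and "support u \<subseteq> {lo..hi} - {lo}" and "lo + hi = c"
  shows "support u \<subseteq> {lo + 1..hi - 1}"
proof -
  have "u hi = e * u lo"
    using assms(1,3) unfolding has_sym_type_def by (metis add_diff_cancel_right')
  moreover have "u lo = 0" using assms(2) by (auto simp: support_def)
  ultimately have "hi \<notin> support u" by (simp add: support_def)
  then show ?thesis using assms(2) by fastforce
qed

lemma support_symmetrize_window:
  assumes "support u \<subseteq> {lo..hi}" and "lo + hi = c"
  shows "support (symmetrize e c u) \<subseteq> {lo..hi}"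
proof
  fix k assume "k \<in> support (symmetrize e c u)"
  then have "k \<in> support u \<or> c - k \<in> support u"
    by (auto simp: support_def symmetrize_def reflect_def)
  then show "k \<in> {lo..hi}" using assms by auto
qed

lemma remainder_symmetrize:
  assumes sa: "has_sym_type a ea ca" and sb: "has_sym_type b eb cb" and eb: "eb * eb = 1"
  shows "a - lmult b (symmetrize (ea * eb) (ca - cb) q) = symmetrize ea ca (a - lmult b q)"
proof -
  have e: "eb * (ea * eb) = ea" by (metis eb mult.left_commute mult.right_neutral)
  have "lmult b (reflect (ea * eb) (ca - cb) q) = lmult (reflect eb cb b) (reflect (ea * eb) (ca - cb) q)"
    using sb by (simp add: has_sym_type_iff_reflect)
  also have "\<dots> = reflect ea ca (lmult b q)"
    unfolding lmult_reflect e by simp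
  finally have bq: "lmult b (reflect (ea * eb) (ca - cb) q) = reflect ea ca (lmult b q)" .
  show ?thesis
  proof
    fix k
    have "a k = ea * a (ca - k)" using sa unfolding has_sym_type_def by blast
    then show "(a - lmult b (symmetrize (ea * eb) (ca - cb) q)) k = symmetrize ea ca (a - lmult b q) k"
      unfolding symmetrize_def lmult_midpoint_right bq by (simp add: reflect_def field_simps)
  qed
qed

lemma has_sym_type_remainder:
  assumes "has_sym_type a ea ca" and "has_sym_type b eb cb" and "eb * eb = 1"
    and "has_sym_type q (ea * eb) (ca - cb)"
  shows "has_sym_type (a - lmult b q) ea ca"
proof -
  have e: "eb * (ea * eb) = ea" by (metis assms(3) mult.left_commute mult.right_neutral)
  have "has_sym_type (lmult b q) ea ca"
    using has_sym_type_lmult[OF assms(2,4), unfolded e] by simp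
  with assms(1) show ?thesis by (rule has_sym_type_diff)
qed

lemma support_bounds:
  assumes "laurent u" and "u \<noteq> (\<lambda>_. 0)"
  obtains lo hi where "support u \<subseteq> {lo..hi}" and "u lo \<noteq> 0" and "u hi \<noteq> 0"
proof
  have fin: "finite (support u)" and ne: "support u \<noteq> {}"
    using assms by (auto simp: laurent_iff_finite_support support_def)
  show "support u \<subseteq> {Min (support u)..Max (support u)}"
    using fin by auto
  show "u (Min (support u)) \<noteq> 0" and "u (Max (support u)) \<noteq> 0"
    using Min_in[OF fin ne] Max_in[OF fin ne] by (auto simp: support_def)
qed

lemma len_le_window:
  assumes "support u \<subseteq> {lo..hi}"
  shows "len u \<le> ereal (of_int (hi - lo))"
proof (cases "u = (\<lambda>_. 0)")
  case True
  then show ?thesis by (simp add: len_def)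
next
  case False
  then have ne: "support u \<noteq> {}" by (auto simp: support_def)
  have fin: "finite (support u)" using assms finite_subset by blast
  have "lo \<le> Min (support u)" and "Max (support u) \<le> hi"
    using assms Min_in[OF fin ne] Max_in[OF fin ne] by auto
  then show ?thesis using False by (simp add: len_def support_def)
qed

lemma len_eq_window:
  assumes "support u \<subseteq> {lo..hi}" and "u lo \<noteq> 0" and "u hi \<noteq> 0"
  shows "len u = ereal (of_int (hi - lo))"
proof -
  have fin: "finite (support u)" using assms(1) finite_subset by blast
  have "lo \<in> support u" and "hi \<in> support u" using assms(2,3) by (simp_all add: support_def)
  then have "Min (support u) = lo" and "Max (support u) = hi"
    using assms(1) fin by (auto intro!: Min_eqI Max_eqI)
  moreover have "u \<noteq> (\<lambda>_. 0)" using assms(2) by auto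
  ultimately show ?thesis by (simp add: len_def support_def)
qed

lemma eliminate_coeff:
  assumes "laurent b" and "b j \<noteq> 0" and "support r \<subseteq> A"
    and "(\<lambda>k. k + (p - j)) ` support b \<subseteq> A"
  shows "support (r - lmult b (monomial (p - j) (r p / b j))) \<subseteq> A - {p}"
proof
  fix k assume "k \<in> support (r - lmult b (monomial (p - j) (r p / b j)))"
  then have nz: "r k \<noteq> r p / b j * b (k - (p - j))"
    by (simp add: support_def lmult_monomial_right[OF assms(1)])
  then have "k \<noteq> p" using assms(2) by auto
  moreover have "k \<in> A"
  proof (cases "r k = 0")
    case True
    then have "k - (p - j) \<in> support b" using nz by (simp add: support_def)
    then show ?thesis using assms(4) by force
  next
    case False
    then show ?thesis using assms(3) by (auto simp: support_def)
  qed
  ultimately show "k \<in> A - {p}" by blast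
qed

lemma shrink_window_step:
  assumes lb: "laurent b" and supp_b: "support b \<subseteq> {mn..mx}"
    and b_mn: "b mn \<noteq> 0" and b_mx: "b mx \<noteq> 0"
    and r: "support r \<subseteq> {lo..hi}" and lo: "lo \<le> s" and hi: "s + (mx - mn) - 1 \<le> hi"
    and not_done: "lo < s \<or> s + (mx - mn) - 1 < hi"
  obtains q0 lo' hi' where "laurent q0" and "support (r - lmult b q0) \<subseteq> {lo'..hi'}"
    and "lo' \<le> s" and "s + (mx - mn) - 1 \<le> hi'" and "hi' - lo' = hi - lo - 1"
proof (cases "s + (mx - mn) - 1 < hi")
  case True
  have "(\<lambda>k. k + (hi - mx)) ` support b \<subseteq> {lo..hi}"
    using supp_b True lo by auto
  from eliminate_coeff[OF lb b_mx r this]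
  have "support (r - lmult b (monomial (hi - mx) (r hi / b mx))) \<subseteq> {lo..hi - 1}" by auto
  with True lo show ?thesis
    by (intro that[of "monomial (hi - mx) (r hi / b mx)" lo "hi - 1"] laurent_monomial) auto
next
  case False
  with not_done have "lo < s" by blast
  have "(\<lambda>k. k + (lo - mn)) ` support b \<subseteq> {lo..hi}"
    using supp_b \<open>lo < s\<close> hi by auto
  from eliminate_coeff[OF lb b_mn r this]
  have "support (r - lmult b (monomial (lo - mn) (r lo / b mn))) \<subseteq> {lo + 1..hi}" by auto
  with \<open>lo < s\<close> hi show ?thesis
    by (intro that[of "monomial (lo - mn) (r lo / b mn)" "lo + 1" hi] laurent_monomial) auto
qed

lemma reduce_into_window:
  assumes lb: "laurent b" and supp_b: "support b \<subseteq> {mn..mx}"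
    and b_mn: "b mn \<noteq> 0" and b_mx: "b mx \<noteq> 0" and la: "laurent a"
  shows "\<exists>q. laurent q \<and> support (a - lmult b q) \<subseteq> {s..s + (mx - mn) - 1}"
proof -
  define L where "L = mx - mn"
  have "0 \<le> L" using supp_b b_mn by (auto simp: L_def support_def)
  have "\<exists>q. laurent q \<and> support (r - lmult b q) \<subseteq> {s..s + L - 1}"
    if "laurent r" and "support r \<subseteq> {lo..hi}" and "lo \<le> s" and "s + L - 1 \<le> hi" for r lo hi
    using that
  proof (induction "nat (hi - lo + 1)" arbitrary: r lo hi rule: less_induct)
    case less
    show ?case
    proof (cases "lo < s \<or> s + L - 1 < hi")
      case False
      with less.prems show ?thesis
        by (intro exI[of _ 0]) (simp add: laurent_zero lmult_zero_right)
    next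
      case True
      then obtain q0 lo' hi' where q0: "laurent q0" "support (r - lmult b q0) \<subseteq> {lo'..hi'}"
        "lo' \<le> s" "s + L - 1 \<le> hi'" "hi' - lo' = hi - lo - 1"
        using shrink_window_step[OF lb supp_b b_mn b_mx less.prems(2,3)] less.prems(4)
        unfolding L_def by blast
      have "nat (hi' - lo' + 1) < nat (hi - lo + 1)"
        using q0(3-5) \<open>0 \<le> L\<close> by simp
      moreover have "laurent (r - lmult b q0)"
        using less.prems(1) q0(1) lb by (simp add: laurent_diff laurent_lmult)
      ultimately obtain q where "laurent q" "support (r - lmult b q0 - lmult b q) \<subseteq> {s..s + L - 1}"
        using less.hyps q0(2-4) by blast
      then show ?thesis
        using q0(1) by (intro exI[of _ "q0 + q"]) (simp add: diff_lmult_add laurent_add)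
    qed
  qed
  moreover have "support a \<subseteq> {min s (Min (support a))..max (s + L - 1) (Max (support a))}"
  proof
    fix k assume "k \<in> support a"
    with la have "Min (support a) \<le> k" and "k \<le> Max (support a)"
      by (simp_all add: laurent_iff_finite_support)
    then show "k \<in> {min s (Min (support a))..max (s + L - 1) (Max (support a))}" by auto
  qed
  ultimately show ?thesis using la unfolding L_def by fastforce
qed

context
  fixes b :: "int \<Rightarrow> complex" and eb :: complex and cb mn mx :: int
  assumes lb: "laurent b" and sb: "has_sym_type b eb cb" and eb: "eb \<in> {1, -1}"
    and supp_b: "support b \<subseteq> {mn..mx}" and b_mn: "b mn \<noteq> 0" and b_mx: "b mx \<noteq> 0"
begin

lemma divisor_len: "len b = ereal (of_int (mx - mn))"
  using supp_b b_mn b_mx by (rule len_eq_window)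

lemma divisor_center: "cb = mn + mx"
  using has_sym_type_center[OF sb supp_b b_mn b_mx] by simp

lemma symmetric_division_window:
  assumes la: "laurent a" and sa: "has_sym_type a ea ca" and ea: "ea \<in> {1, -1}"
    and window: "lo + hi = ca" "mx - mn - 1 \<le> hi - lo"
  shows "\<exists>q. laurent q \<and> has_sym_type q (ea * eb) (ca - cb)
           \<and> has_sym_type (a - lmult b q) ea ca \<and> support (a - lmult b q) \<subseteq> {lo..hi}"
proof -
  obtain q where q: "laurent q" "support (a - lmult b q) \<subseteq> {lo..lo + (mx - mn) - 1}"
    using reduce_into_window[OF lb supp_b b_mn b_mx la] by blast
  define q' where "q' = symmetrize (ea * eb) (ca - cb) q"
  have eb2: "eb * eb = 1" and "ea * eb * (ea * eb) = 1" and "ea * ea = 1"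
    using ea eb by auto
  have r': "a - lmult b q' = symmetrize ea ca (a - lmult b q)"
    unfolding q'_def using sa sb eb2 by (rule remainder_symmetrize)
  have "support (a - lmult b q) \<subseteq> {lo..hi}" using q(2) window(2) by auto
  then have "support (a - lmult b q') \<subseteq> {lo..hi}"
    unfolding r' using window(1) by (rule support_symmetrize_window)
  moreover have "laurent q'" unfolding q'_def using q(1) by (rule laurent_symmetrize)
  moreover have "has_sym_type q' (ea * eb) (ca - cb)"
    unfolding q'_def by (rule has_sym_type_symmetrize) fact
  moreover have "has_sym_type (a - lmult b q') ea ca"
    unfolding r' by (rule has_sym_type_symmetrize) fact
  ultimately show ?thesis by blast
qed

lemma symmetric_division_odd:
  assumes la: "laurent a" and sa: "has_sym_type a ea ca" and ea: "ea \<in> {1, -1}"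
    and odd: "odd (ca - cb)"
  shows "\<exists>q. laurent q \<and> has_sym_type q (ea * eb) (ca - cb)
           \<and> len (a - lmult b q) < len b \<and> has_sym_type (a - lmult b q) ea ca"
proof -
  obtain m where m: "ca - cb = 2 * m + 1" using odd by (rule oddE)
  have "(m + mn + 1) + (m + mx) = ca" using m divisor_center by simp
  then obtain q where q: "laurent q" "has_sym_type q (ea * eb) (ca - cb)"
    "has_sym_type (a - lmult b q) ea ca" "support (a - lmult b q) \<subseteq> {m + mn + 1..m + mx}"
    using symmetric_division_window[OF la sa ea] by fastforce
  have "len (a - lmult b q) \<le> ereal (of_int (m + mx - (m + mn + 1)))"
    using q(4) by (rule len_le_window)
  also have "\<dots> < len b" by (simp add: divisor_len)
  finally show ?thesis using q by blast
qed

lemma symmetric_division_even: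
  assumes la: "laurent a" and sa: "has_sym_type a ea ca" and ea: "ea \<in> {1, -1}"
    and even: "even (ca - cb)"
  shows "\<exists>q. laurent q \<and> has_sym_type q (ea * eb) (ca - cb)
           \<and> len (a - lmult b q) \<le> len b \<and> has_sym_type (a - lmult b q) ea ca"
proof -
  obtain m where m: "ca - cb = 2 * m" using even by (rule evenE)
  have "(m + mn) + (m + mx) = ca" using m divisor_center by simp
  then obtain q where q: "laurent q" "has_sym_type q (ea * eb) (ca - cb)"
    "has_sym_type (a - lmult b q) ea ca" "support (a - lmult b q) \<subseteq> {m + mn..m + mx}"
    using symmetric_division_window[OF la sa ea] by fastforce
  have "len (a - lmult b q) \<le> ereal (of_int (m + mx - (m + mn)))"
    using q(4) by (rule len_le_window)
  also have "\<dots> = len b" by (simp add: divisor_len)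
  finally show ?thesis using q by blast
qed

lemma symmetric_division_even_same_sign:
  assumes la: "laurent a" and sa: "has_sym_type a ea ca" and ea: "ea \<in> {1, -1}"
    and even: "even (ca - cb)" and same_sign: "ea * eb = 1"
  shows "\<exists>q. laurent q \<and> has_sym_type q (ea * eb) (ca - cb)
           \<and> len (a - lmult b q) < len b \<and> has_sym_type (a - lmult b q) ea ca"
proof -
  obtain m where m: "ca - cb = 2 * m" using even by (rule evenE)
  have window: "(m + mn) + (m + mx) = ca" using m divisor_center by simp
  then obtain q where q: "laurent q" "has_sym_type q (ea * eb) (ca - cb)"
    "support (a - lmult b q) \<subseteq> {m + mn..m + mx}"
    using symmetric_division_window[OF la sa ea] by fastforce
  define d where "d = (a - lmult b q) (m + mn) / b mn"
  define q' where "q' = q + monomial m d"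
  have "laurent q'" using q(1) by (simp add: q'_def laurent_add laurent_monomial)
  have sq': "has_sym_type q' (ea * eb) (ca - cb)"
    using q(2) has_sym_type_monomial[of m d] by (simp add: q'_def m same_sign has_sym_type_add)
  have "(\<lambda>k. k + (m + mn - mn)) ` support b \<subseteq> {m + mn..m + mx}" using supp_b by auto
  from eliminate_coeff[OF lb b_mn q(3) this]
  have "support (a - lmult b q') \<subseteq> {m + mn..m + mx} - {m + mn}"
    by (simp add: q'_def d_def diff_lmult_add)
  moreover have sr': "has_sym_type (a - lmult b q') ea ca"
    using eb by (intro has_sym_type_remainder[OF sa sb _ sq']) auto
  ultimately have "support (a - lmult b q') \<subseteq> {m + mn + 1..m + mx - 1}"
    using window by (intro has_sym_type_support_trim[OF sr'])
  then have "len (a - lmult b q') \<le> ereal (of_int (m + mx - 1 - (m + mn + 1)))"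
    by (rule len_le_window)
  also have "\<dots> < len b" by (simp add: divisor_len)
  finally show ?thesis using \<open>laurent q'\<close> sq' sr' by blast
qed

end

theorem lemma3p6:
  fixes a b :: "int \<Rightarrow> complex" and ea eb :: complex and ca cb :: int
  assumes "laurent a" and "laurent b" and "b \<noteq> (\<lambda>_. 0)"
    and "ea \<in> {1, -1}" and "eb \<in> {1, -1}"
    and "has_sym_type a ea ca" and "has_sym_type b eb cb"
  shows "((ea * eb = 1 \<or> odd (ca - cb)) \<longrightarrow>
           (\<exists>q. laurent q \<and> has_sym_type q (ea * eb) (ca - cb)
                \<and> len (a - lmult b q) < len b
                \<and> has_sym_type (a - lmult b q) ea ca))
       \<and> ((ea * eb = -1 \<and> even (ca - cb)) \<longrightarrow>
           (\<exists>q. laurent q \<and> has_sym_type q (ea * eb) (ca - cb)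
                \<and> len (a - lmult b q) \<le> len b
                \<and> has_sym_type (a - lmult b q) ea ca))"
proof -
  obtain mn mx where "support b \<subseteq> {mn..mx}" and "b mn \<noteq> 0" and "b mx \<noteq> 0"
    using support_bounds[OF assms(2,3)] by blast
  note divisor = assms(2,7,5) this and dividend = assms(1,6,4)
  show ?thesis
    using symmetric_division_odd[OF divisor dividend]
      symmetric_division_even[OF divisor dividend]
      symmetric_division_even_same_sign[OF divisor dividend]
    by blast
qed

end
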